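(* Let $p>0$, $d>0$, $\chi>0$ and $\delta>0$ be real parameters, and for $\lambda>0$ define $$c(\lambda)=\lambda+\frac{p}{\lambda}-\frac{2\chi}{\pi}\arctan\!\left(\frac{1}{\delta}\min\!\left(\lambda,\frac{1}{\sqrt{d}}\right)\right).$$ Set $$\Lambda=\left\{\frac{p-\delta^2+\frac{2\chi}{\pi}\delta+\sqrt{\left(p-\delta^2+\frac{2\chi}{\pi}\delta\right)^2+4\delta^2p}}{2}\right\}^{1/2}.$$ Then $$\min_{\lambda>0} c(\lambda)=\begin{cases} 2\sqrt{p}-\frac{2\chi}{\pi}\arctan\!\left(\frac{1}{\sqrt{d}\,\delta}\right), & \text{if } dp>1,\\[4pt] \frac{1}{\sqrt{d}}+p\sqrt{d}-\frac{2\chi}{\pi}\arctan\!\left(\frac{1}{\sqrt{d}\,\delta}\right), & \text{if } 1-\frac{2\chi}{\pi\left(\delta+\frac{1}{d\delta}\right)}<dp<1,\\[4pt] \Lambda+\frac{p}{\Lambda}-\frac{2\chi}{\pi}\arctan\!\left(\frac{\Lambda}{\delta}\right), & \text{if } dp\le 1-\frac{2\chi}{\pi\left(\delta+\frac{1}{d\delta}\right)}. \end{cases}$$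
   Context: The function $c(\lambda)$ is the dispersion relation between the propagation speed $c$ and the exponential decay rate $\lambda$ of the front (density $\propto e^{-\lambda(x-ct)}$ far ahead) for the one-dimensional flux-limited Keller–Segel equation $\partial_t\rho+\partial_x(U_\delta[\partial_x\log S]\rho)=\partial_{xx}\rho+P(\rho)\rho$, $-d\partial_{xx}S+S=\rho$, with growth rate $P(\rho)=p$ for $0\le\rho\le 1/(1+p)$, and with chemotactic flux function $U_\delta(X)=\frac{2\chi}{\pi}\arctan(X/\delta)$. Here $p$ is the proliferation rate at low density, $d$ the diffusion coefficient of the chemoattractant, $\chi$ the modulation amplitude and $\delta^{-1}$ the stiffness of the chemotactic response. *)

theory Defs
  imports Complex_Main
begin

definition disp :: "real \<Rightarrow> real \<Rightarrow> real \<Rightarrow> real \<Rightarrow> real \<Rightarrow> real" where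
  "disp p d \<chi> \<delta> lam = lam + p / lam - (2 * \<chi> / pi) * arctan ((1 / \<delta>) * min lam (1 / sqrt d))"

definition Lam :: "real \<Rightarrow> real \<Rightarrow> real \<Rightarrow> real \<Rightarrow> real" where
  "Lam p d \<chi> \<delta> = sqrt ((p - \<delta>\<^sup>2 + (2 * \<chi> / pi) * \<delta>
      + sqrt ((p - \<delta>\<^sup>2 + (2 * \<chi> / pi) * \<delta>)\<^sup>2 + 4 * \<delta>\<^sup>2 * p)) / 2)"

definition is_min_on :: "(real \<Rightarrow> real) \<Rightarrow> real set \<Rightarrow> real \<Rightarrow> bool" where
  "is_min_on f S v \<longleftrightarrow> (\<exists>x\<in>S. f x = v) \<and> (\<forall>x\<in>S. v \<le> f x)"

end

theory Submission
  imports Defs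
begin

text \<open>
  Put \<open>k = 2\<chi>/\<pi>\<close> and \<open>s = 1/\<surd>d\<close>. Below the cutoff \<open>s\<close> the dispersion relation is
  \<open>G(\<lambda>) = \<lambda> + p/\<lambda> - k arctan(\<lambda>/\<delta>)\<close>, whose derivative has the sign of
  \<open>\<lambda>\<^sup>4 - (p - \<delta>\<^sup>2 + k\<delta>)\<lambda>\<^sup>2 - \<delta>\<^sup>2p\<close>; this quartic has exactly one positive root \<open>\<Lambda>\<close>, so
  \<open>G\<close> decreases up to \<open>\<Lambda>\<close> and increases afterwards. Above the cutoff the arctan term is
  frozen and \<open>c(\<lambda>) = \<lambda> + p/\<lambda> - const\<close>, which by AM-GM is minimal at \<open>\<surd>p\<close>.
  If \<open>dp > 1\<close> the point \<open>\<surd>p\<close> lies above the cutoff and is the global minimiser, because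
  the arctan term never exceeds its frozen value. If \<open>dp \<le> 1\<close>, \<open>c\<close> increases beyond \<open>s\<close>, and
  the minimum sits at \<open>min s \<Lambda>\<close>; evaluating the quartic at \<open>s\<close> shows that \<open>s < \<Lambda>\<close>
  is exactly the condition \<open>1 - k/(\<delta> + 1/(d\<delta>)) < dp\<close>.
\<close>

definition quartic_root :: "real \<Rightarrow> real \<Rightarrow> real" where
  "quartic_root a q = sqrt ((a + sqrt (a\<^sup>2 + 4 * q)) / 2)"

lemma quartic_root_pos:
  fixes a q :: real assumes "q > 0"
  shows "quartic_root a q > 0"
proof -
  have "\<bar>a\<bar> < sqrt (a\<^sup>2 + 4 * q)"
    using assms by (intro real_less_rsqrt) (simp add: power2_abs)
  then show ?thesis unfolding quartic_root_def by simp
qed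

lemma quartic_factor:
  fixes a q x :: real
  assumes "q > 0"
  defines "r \<equiv> quartic_root a q"
  shows "x ^ 4 - a * x\<^sup>2 - q = (x - r) * ((x + r) * (x\<^sup>2 + r\<^sup>2 - a))"
    and "r\<^sup>2 - a > 0"
proof -
  define D where "D = sqrt (a\<^sup>2 + 4 * q)"
  have D2: "D\<^sup>2 = a\<^sup>2 + 4 * q" unfolding D_def using assms by (simp add: add_nonneg_pos)
  have "\<bar>a\<bar> < D"
    unfolding D_def using assms by (intro real_less_rsqrt) (simp add: power2_abs)
  then have "a + D > 0" "D - a > 0" by linarith+
  then have r2: "r\<^sup>2 = (a + D) / 2" unfolding r_def quartic_root_def D_def by simp
  show "r\<^sup>2 - a > 0" using \<open>D - a > 0\<close> unfolding r2 by simp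
  have "(r\<^sup>2)\<^sup>2 - a * r\<^sup>2 - q = 0" unfolding r2 using D2 by (simp add: field_simps power2_eq_square)
  then show "x ^ 4 - a * x\<^sup>2 - q = (x - r) * ((x + r) * (x\<^sup>2 + r\<^sup>2 - a))"
    by (simp add: algebra_simps power2_eq_square power4_eq_xxxx)
qed

lemma quartic_neg_iff:
  fixes a q x :: real
  assumes "q > 0" "x \<ge> 0"
  shows "x ^ 4 - a * x\<^sup>2 - q < 0 \<longleftrightarrow> x < quartic_root a q"
    and "x ^ 4 - a * x\<^sup>2 - q \<le> 0 \<longleftrightarrow> x \<le> quartic_root a q"
proof -
  define r where "r = quartic_root a q"
  define P where "P = (x + r) * (x\<^sup>2 + r\<^sup>2 - a)"
  have "P > 0"
    using quartic_root_pos[OF assms(1), of a] quartic_factor(2)[OF assms(1), of a] assms(2)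
    unfolding P_def r_def by (intro mult_pos_pos) (auto simp: add_strict_increasing2)
  moreover have "x ^ 4 - a * x\<^sup>2 - q = (x - r) * P"
    unfolding P_def r_def using quartic_factor(1)[OF assms(1)] by simp
  ultimately show "x ^ 4 - a * x\<^sup>2 - q < 0 \<longleftrightarrow> x < quartic_root a q"
    and "x ^ 4 - a * x\<^sup>2 - q \<le> 0 \<longleftrightarrow> x \<le> quartic_root a q"
    unfolding r_def by (auto simp: mult_less_0_iff mult_le_0_iff)
qed

definition disp_core :: "real \<Rightarrow> real \<Rightarrow> real \<Rightarrow> real \<Rightarrow> real" where
  "disp_core p k \<delta> x = x + p / x - k * arctan (x / \<delta>)"

lemma disp_core_deriv:
  fixes p k \<delta> x :: real
  assumes "x > 0" "\<delta> > 0"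
  shows "DERIV (disp_core p k \<delta>) x :>
           (x ^ 4 - (p - \<delta>\<^sup>2 + k * \<delta>) * x\<^sup>2 - \<delta>\<^sup>2 * p) / (x\<^sup>2 * (\<delta>\<^sup>2 + x\<^sup>2))"
proof -
  have "DERIV (disp_core p k \<delta>) x :> 1 - p / x\<^sup>2 - k * (1 / (1 + (x / \<delta>)\<^sup>2) * (1 / \<delta>))"
    unfolding disp_core_def[abs_def] using assms
    by (intro derivative_eq_intros refl) (auto simp: divide_inverse power2_eq_square)
  moreover have "1 - p / x\<^sup>2 - k * (1 / (1 + (x / \<delta>)\<^sup>2) * (1 / \<delta>))
      = (x ^ 4 - (p - \<delta>\<^sup>2 + k * \<delta>) * x\<^sup>2 - \<delta>\<^sup>2 * p) / (x\<^sup>2 * (\<delta>\<^sup>2 + x\<^sup>2))"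
    using assms by (simp add: field_simps power2_eq_square power4_eq_xxxx add_pos_pos)
  ultimately show ?thesis by simp
qed

definition disp_core_argmin :: "real \<Rightarrow> real \<Rightarrow> real \<Rightarrow> real" where
  "disp_core_argmin p k \<delta> = quartic_root (p - \<delta>\<^sup>2 + k * \<delta>) (\<delta>\<^sup>2 * p)"

lemma disp_core_deriv_nonpos:
  fixes p k \<delta> x :: real
  assumes "p > 0" "\<delta> > 0" "x > 0" "x \<le> disp_core_argmin p k \<delta>"
  shows "(x ^ 4 - (p - \<delta>\<^sup>2 + k * \<delta>) * x\<^sup>2 - \<delta>\<^sup>2 * p) / (x\<^sup>2 * (\<delta>\<^sup>2 + x\<^sup>2)) \<le> 0"
  using assms quartic_neg_iff(2)[of "\<delta>\<^sup>2 * p" x "p - \<delta>\<^sup>2 + k * \<delta>"]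
  by (intro divide_nonpos_pos) (auto simp: disp_core_argmin_def add_pos_pos)

lemma disp_core_deriv_nonneg:
  fixes p k \<delta> x :: real
  assumes "p > 0" "\<delta> > 0" "x > 0" "disp_core_argmin p k \<delta> \<le> x"
  shows "(x ^ 4 - (p - \<delta>\<^sup>2 + k * \<delta>) * x\<^sup>2 - \<delta>\<^sup>2 * p) / (x\<^sup>2 * (\<delta>\<^sup>2 + x\<^sup>2)) \<ge> 0"
  using assms quartic_neg_iff(1)[of "\<delta>\<^sup>2 * p" x "p - \<delta>\<^sup>2 + k * \<delta>"]
  by (intro divide_nonneg_pos) (auto simp: disp_core_argmin_def add_pos_pos)

lemma disp_core_antimono:
  fixes p k \<delta> x y :: real
  assumes "p > 0" "\<delta> > 0" "0 < x" "x \<le> y" "y \<le> disp_core_argmin p k \<delta>"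
  shows "disp_core p k \<delta> y \<le> disp_core p k \<delta> x"
  using assms disp_core_deriv disp_core_deriv_nonpos
  by (intro DERIV_nonpos_imp_nonincreasing[OF \<open>x \<le> y\<close>]) (meson order_less_le_trans order_trans)

lemma disp_core_mono:
  fixes p k \<delta> x y :: real
  assumes "p > 0" "\<delta> > 0" "disp_core_argmin p k \<delta> \<le> x" "x \<le> y"
  shows "disp_core p k \<delta> x \<le> disp_core p k \<delta> y"
proof -
  have "disp_core_argmin p k \<delta> > 0"
    unfolding disp_core_argmin_def using assms by (simp add: quartic_root_pos)
  then show ?thesis
    using assms disp_core_deriv disp_core_deriv_nonneg
    by (intro DERIV_nonneg_imp_nondecreasing[OF \<open>x \<le> y\<close>]) (meson order_less_le_trans order_trans)
qed

lemma disp_core_argmin_le: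
  fixes p k \<delta> x :: real
  assumes "p > 0" "\<delta> > 0" "x > 0"
  shows "disp_core p k \<delta> (disp_core_argmin p k \<delta>) \<le> disp_core p k \<delta> x"
  using assms disp_core_antimono[of p \<delta> x] disp_core_mono[of p \<delta> k]
  by (cases "x \<le> disp_core_argmin p k \<delta>") auto

lemma cutoff_less_disp_core_argmin_iff:
  fixes p d k \<delta> :: real
  assumes "p > 0" "d > 0" "\<delta> > 0"
  shows "1 - k / (\<delta> + 1 / (d * \<delta>)) < d * p
     \<longleftrightarrow> 1 / sqrt d < disp_core_argmin p k \<delta>"
proof -
  have "1 + \<delta> * (\<delta> * d) > 0" using assms by (simp add: add_pos_pos)
  then have "1 - k / (\<delta> + 1 / (d * \<delta>)) < d * p \<longleftrightarrow> 1 - d * (p - \<delta>\<^sup>2 + k * \<delta>) - d\<^sup>2 * (\<delta>\<^sup>2 * p) < 0"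
    using assms by (simp add: field_simps power2_eq_square)
  also have "\<dots> \<longleftrightarrow> (1 / sqrt d) ^ 4 - (p - \<delta>\<^sup>2 + k * \<delta>) * (1 / sqrt d)\<^sup>2 - \<delta>\<^sup>2 * p < 0"
  proof -
    have s2: "(1 / sqrt d)\<^sup>2 = 1 / d"
      using assms by (simp add: power_divide)
    have "(1 / sqrt d) ^ 4 = (1 / d)\<^sup>2"
      unfolding s2[symmetric] by (simp flip: power_mult)
    then show ?thesis using s2 assms by (simp add: field_simps power2_eq_square)
  qed
  also have "\<dots> \<longleftrightarrow> 1 / sqrt d < disp_core_argmin p k \<delta>"
    unfolding disp_core_argmin_def using assms by (intro quartic_neg_iff) simp_all
  finally show ?thesis .
qed

lemma Lam_eq_disp_core_argmin: "Lam p d \<chi> \<delta> = disp_core_argmin p (2 * \<chi> / pi) \<delta>"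
  unfolding Lam_def disp_core_argmin_def quartic_root_def by (simp add: mult.assoc)

lemma arith_geom_mean_le:
  fixes p x :: real
  assumes "p > 0" "x > 0"
  shows "2 * sqrt p \<le> x + p / x"
proof -
  have "x + p / x - 2 * sqrt p = (x - sqrt p)\<^sup>2 / x"
    using assms by (simp add: field_simps power2_eq_square)
  then show ?thesis using assms by (metis diff_ge_0_iff_ge divide_nonneg_pos zero_le_power2)
qed

lemma add_divide_self_mono:
  fixes p s x :: real
  assumes "0 < s" "p \<le> s\<^sup>2" "s \<le> x"
  shows "s + p / s \<le> x + p / x"
proof -
  have "s * s \<le> x * s"
    using assms by (simp add: mult_right_mono)
  moreover have "p \<le> s * s"
    using assms by (simp add: power2_eq_square)
  ultimately have "x * s - p \<ge> 0"
    by linarith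
  moreover have "x + p / x - (s + p / s) = (x - s) * (x * s - p) / (x * s)"
    using assms by (simp add: field_simps)
  moreover have "(x - s) * (x * s - p) / (x * s) \<ge> 0"
    using assms calculation(1) by simp
  ultimately show ?thesis by linarith
qed

lemma disp_below_cutoff:
  "x \<le> 1 / sqrt d \<Longrightarrow> disp p d \<chi> \<delta> x = disp_core p (2 * \<chi> / pi) \<delta> x"
  unfolding disp_def disp_core_def by simp

lemma disp_above_cutoff:
  "1 / sqrt d \<le> x \<Longrightarrow>
     disp p d \<chi> \<delta> x = x + p / x - (2 * \<chi> / pi) * arctan (1 / (sqrt d * \<delta>))"
  unfolding disp_def by (simp add: min_absorb2 mult.commute)

lemma disp_above_cutoff_formula_le:
  assumes "\<chi> \<ge> 0" "\<delta> > 0"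
  shows "x + p / x - (2 * \<chi> / pi) * arctan (1 / (sqrt d * \<delta>)) \<le> disp p d \<chi> \<delta> x"
proof -
  have "min x (1 / sqrt d) / \<delta> \<le> 1 / sqrt d / \<delta>"
    using assms by (intro divide_right_mono) auto
  then have "arctan (min x (1 / sqrt d) / \<delta>) \<le> arctan (1 / (sqrt d * \<delta>))"
    by (simp add: arctan_le_iff)
  then have "(2 * \<chi> / pi) * arctan (min x (1 / sqrt d) / \<delta>)
      \<le> (2 * \<chi> / pi) * arctan (1 / (sqrt d * \<delta>))"
    using assms by (intro mult_left_mono) auto
  then show ?thesis
    unfolding disp_def by (simp add: mult.commute)
qed

lemma disp_cutoff_le:
  assumes "p > 0" "d > 0" "d * p \<le> 1" "1 / sqrt d \<le> x"
  shows "disp p d \<chi> \<delta> (1 / sqrt d) \<le> disp p d \<chi> \<delta> x"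
proof -
  have "p \<le> (1 / sqrt d)\<^sup>2"
    using assms by (simp add: power_divide pos_le_divide_eq mult.commute)
  then show ?thesis
    using assms add_divide_self_mono[of "1 / sqrt d" p x] by (simp add: disp_above_cutoff)
qed

lemma disp_min_above_cutoff:
  fixes p d \<chi> \<delta> :: real
  assumes "p > 0" "d > 0" "\<chi> \<ge> 0" "\<delta> > 0" "d * p > 1"
  shows "is_min_on (disp p d \<chi> \<delta>) {0<..}
           (2 * sqrt p - (2 * \<chi> / pi) * arctan (1 / (sqrt d * \<delta>)))"
  unfolding is_min_on_def
proof (intro conjI bexI ballI)
  have "1 / d \<le> p"
    using assms by (simp add: pos_divide_le_eq mult.commute)
  then have "1 / sqrt d \<le> sqrt p"
    by (metis real_sqrt_divide real_sqrt_le_mono real_sqrt_one)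
  moreover have "sqrt p + p / sqrt p = 2 * sqrt p"
    using assms by (metis mult_2 real_div_sqrt less_eq_real_def)
  ultimately show "disp p d \<chi> \<delta> (sqrt p) = 2 * sqrt p - (2 * \<chi> / pi) * arctan (1 / (sqrt d * \<delta>))"
    by (simp add: disp_above_cutoff)
  show "sqrt p \<in> {0<..}" using assms by simp
next
  fix x :: real
  assume "x \<in> {0<..}"
  then show "2 * sqrt p - (2 * \<chi> / pi) * arctan (1 / (sqrt d * \<delta>)) \<le> disp p d \<chi> \<delta> x"
    using assms arith_geom_mean_le[of p x] disp_above_cutoff_formula_le[of \<chi> \<delta> x p d] by simp
qed

lemma disp_min_below_cutoff:
  fixes p d \<chi> \<delta> :: real
  assumes "p > 0" "d > 0" "\<delta> > 0" "d * p \<le> 1"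
  defines "m \<equiv> min (1 / sqrt d) (disp_core_argmin p (2 * \<chi> / pi) \<delta>)"
  shows "is_min_on (disp p d \<chi> \<delta>) {0<..} (disp_core p (2 * \<chi> / pi) \<delta> m)"
proof -
  let ?core = "disp_core p (2 * \<chi> / pi) \<delta>"
  have core_min: "?core m \<le> ?core x" if "0 < x" "x \<le> 1 / sqrt d" for x
  proof (cases "disp_core_argmin p (2 * \<chi> / pi) \<delta> \<le> 1 / sqrt d")
    case True
    then show ?thesis
      unfolding m_def using assms that by (simp add: min_absorb2 disp_core_argmin_le)
  next
    case False
    then show ?thesis
      unfolding m_def using assms that by (simp add: disp_core_antimono)
  qed
  have m_pos: "m > 0"
    unfolding m_def disp_core_argmin_def using assms by (simp add: quartic_root_pos)
  have "disp p d \<chi> \<delta> m = ?core m"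
    unfolding m_def by (simp add: disp_below_cutoff)
  moreover have "?core m \<le> disp p d \<chi> \<delta> x" if "x > 0" for x
  proof (cases "x \<le> 1 / sqrt d")
    case True
    then show ?thesis using core_min that by (simp add: disp_below_cutoff)
  next
    case False
    have "?core m \<le> disp p d \<chi> \<delta> (1 / sqrt d)"
      using core_min[of "1 / sqrt d"] assms by (simp add: disp_below_cutoff)
    also have "\<dots> \<le> disp p d \<chi> \<delta> x"
      using False assms by (intro disp_cutoff_le) auto
    finally show ?thesis .
  qed
  ultimately show ?thesis
    unfolding is_min_on_def using m_pos by (metis greaterThan_iff)
qed

theorem mainTheorem1:
  fixes p d \<chi> \<delta> :: real
  assumes "p > 0" and "d > 0" and "\<chi> > 0" and "\<delta> > 0"
  shows "(d * p > 1 \<longrightarrow>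
           is_min_on (disp p d \<chi> \<delta>) {0<..}
             (2 * sqrt p - (2 * \<chi> / pi) * arctan (1 / (sqrt d * \<delta>))))
       \<and> (1 - 2 * \<chi> / (pi * (\<delta> + 1 / (d * \<delta>))) < d * p \<and> d * p < 1 \<longrightarrow>
           is_min_on (disp p d \<chi> \<delta>) {0<..}
             (1 / sqrt d + p * sqrt d - (2 * \<chi> / pi) * arctan (1 / (sqrt d * \<delta>))))
       \<and> (d * p \<le> 1 - 2 * \<chi> / (pi * (\<delta> + 1 / (d * \<delta>))) \<longrightarrow>
           is_min_on (disp p d \<chi> \<delta>) {0<..}
             (Lam p d \<chi> \<delta> + p / Lam p d \<chi> \<delta>
              - (2 * \<chi> / pi) * arctan (Lam p d \<chi> \<delta> / \<delta>)))"
proof -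
  let ?\<Lambda> = "disp_core_argmin p (2 * \<chi> / pi) \<delta>"
  have cutoff_iff: "1 - 2 * \<chi> / (pi * (\<delta> + 1 / (d * \<delta>))) < d * p \<longleftrightarrow> 1 / sqrt d < ?\<Lambda>"
    using cutoff_less_disp_core_argmin_iff[of p d \<delta> "2 * \<chi> / pi"] assms by simp
  show ?thesis
  proof (intro conjI impI)
    show "d * p > 1 \<Longrightarrow> is_min_on (disp p d \<chi> \<delta>) {0<..}
             (2 * sqrt p - (2 * \<chi> / pi) * arctan (1 / (sqrt d * \<delta>)))"
      using assms by (intro disp_min_above_cutoff) auto
  next
    assume "1 - 2 * \<chi> / (pi * (\<delta> + 1 / (d * \<delta>))) < d * p \<and> d * p < 1"
    then have "1 / sqrt d < ?\<Lambda>" "d * p \<le> 1" using cutoff_iff by auto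
    then show "is_min_on (disp p d \<chi> \<delta>) {0<..}
             (1 / sqrt d + p * sqrt d - (2 * \<chi> / pi) * arctan (1 / (sqrt d * \<delta>)))"
      using disp_min_below_cutoff[of p d \<delta> \<chi>] assms
      by (simp add: disp_core_def real_div_sqrt mult.commute)
  next
    assume h: "d * p \<le> 1 - 2 * \<chi> / (pi * (\<delta> + 1 / (d * \<delta>)))"
    have "2 * \<chi> / (pi * (\<delta> + 1 / (d * \<delta>))) > 0" using assms by (simp add: add_pos_pos)
    then have "?\<Lambda> \<le> 1 / sqrt d" "d * p \<le> 1" using h cutoff_iff by auto
    then show "is_min_on (disp p d \<chi> \<delta>) {0<..}
             (Lam p d \<chi> \<delta> + p / Lam p d \<chi> \<delta> - (2 * \<chi> / pi) * arctan (Lam p d \<chi> \<delta> / \<delta>))"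
      using disp_min_below_cutoff[of p d \<delta> \<chi>] assms
      by (simp add: Lam_eq_disp_core_argmin disp_core_def min_absorb2)
  qed
qed

end
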